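(* Up to graph isomorphism, there is exactly one graph with exactly three vertices that is isomorphic to $\Gamma_E(R)$ for some commutative Noetherian ring $R$ with unity.
   Context: For $x,y\in R$ write $x\sim y$ iff $\operatorname{ann}(x)=\operatorname{ann}(y)$; $[x]$ denotes the equivalence class of $x$. Let $Z^*(R)$ be the set of nonzero zero divisors of $R$. The graph $\Gamma_E(R)$ is the simple graph whose vertices are the classes $[x]$ with $x\in Z^*(R)$, two distinct vertices $[x],[y]$ being adjacent iff $xy=0$ (this is independent of representatives). *)

theory Defs
  imports "HOL-Algebra.Ring_Divisibility"
begin

definition simple_graph :: "'v set \<Rightarrow> ('v \<Rightarrow> 'v \<Rightarrow> bool) \<Rightarrow> bool" where
  "simple_graph V E \<longleftrightarrow> (\<forall>x y. E x y \<longrightarrow> x \<in> V \<and> y \<in> V \<and> x \<noteq> y \<and> E y x)"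

definition graph_iso :: "'v set \<Rightarrow> ('v \<Rightarrow> 'v \<Rightarrow> bool) \<Rightarrow> 'w set \<Rightarrow> ('w \<Rightarrow> 'w \<Rightarrow> bool) \<Rightarrow> bool" where
  "graph_iso V E W F \<longleftrightarrow>
     (\<exists>f. bij_betw f V W \<and> (\<forall>x\<in>V. \<forall>y\<in>V. E x y \<longleftrightarrow> F (f x) (f y)))"

definition ann :: "('a, 'b) ring_scheme \<Rightarrow> 'a \<Rightarrow> 'a set" where
  "ann R x = {y \<in> carrier R. x \<otimes>\<^bsub>R\<^esub> y = \<zero>\<^bsub>R\<^esub>}"

definition zd_star :: "('a, 'b) ring_scheme \<Rightarrow> 'a set" where
  "zd_star R = {x \<in> carrier R. x \<noteq> \<zero>\<^bsub>R\<^esub> \<and>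
      (\<exists>y \<in> carrier R. y \<noteq> \<zero>\<^bsub>R\<^esub> \<and> x \<otimes>\<^bsub>R\<^esub> y = \<zero>\<^bsub>R\<^esub>)}"

definition ann_class :: "('a, 'b) ring_scheme \<Rightarrow> 'a \<Rightarrow> 'a set" where
  "ann_class R x = {y \<in> carrier R. ann R y = ann R x}"

definition GammaE_V :: "('a, 'b) ring_scheme \<Rightarrow> 'a set set" where
  "GammaE_V R = ann_class R ` zd_star R"

definition GammaE_E :: "('a, 'b) ring_scheme \<Rightarrow> 'a set \<Rightarrow> 'a set \<Rightarrow> bool" where
  "GammaE_E R A B \<longleftrightarrow> A \<in> GammaE_V R \<and> B \<in> GammaE_V R \<and> A \<noteq> B \<and>
      (\<exists>x\<in>A. \<exists>y\<in>B. x \<otimes>\<^bsub>R\<^esub> y = \<zero>\<^bsub>R\<^esub>)"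

end

theory Submission
  imports Defs
begin

(*
  In Z/16 the nonzero zero divisors fall into the annihilator classes [2], [4], [8]; since 8 kills
  2 and 4 but 2 * 4 = 8, the graph is the path [2] - [8] - [4].

  Conversely, let R be any commutative ring whose graph has three
  vertices. It has no isolated vertex: suppose every nonzero y with x y = 0 had ann(y) = ann(x).
  Then x^2 = 0. For a zero divisor z outside the class of x we get x z \<noteq> 0, so y = x z qualifies;
  a nonzero w with z w = 0 lies in ann(x z) = ann(x), so w qualifies too, and z in ann(w) = ann(x)
  gives x z = 0, a contradiction.
  It has no triangle: if [a], [b], [c] were pairwise adjacent, then a + b is a zero divisor (it is
  killed by c) whose class is one of the three, and each choice forces a^2 = 0 or b^2 = 0. Doing
  this for all three pairs, two of the vertices, say a and b, square to zero; then each of them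
  annihilates every zero divisor, so ann(a) = {0} \<union> Z*(R) = ann(b), a contradiction. The only
  triangle-free graph on three vertices without isolated vertices is the path.
*)

definition path_adj :: "nat \<Rightarrow> nat \<Rightarrow> nat \<Rightarrow> bool" where
  "path_adj n x y \<longleftrightarrow> x < n \<and> y < n \<and> (Suc x = y \<or> Suc y = x)"

lemma simple_graph_path_adj: "simple_graph {..<n} (path_adj n)"
  by (auto simp: simple_graph_def path_adj_def)

lemma graph_iso_sym:
  assumes "graph_iso V E W F"
  shows "graph_iso W F V E"
proof -
  obtain f where f: "bij_betw f V W" and adj: "\<forall>x\<in>V. \<forall>y\<in>V. E x y \<longleftrightarrow> F (f x) (f y)"
    using assms unfolding graph_iso_def by blast
  let ?g = "inv_into V f"
  have "bij_betw ?g W V" using f by (rule bij_betw_inv_into)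
  moreover have "F x y \<longleftrightarrow> E (?g x) (?g y)" if "x \<in> W" "y \<in> W" for x y
    using adj f that by (simp add: bij_betw_def inv_into_into f_inv_into_f)
  ultimately show ?thesis unfolding graph_iso_def by blast
qed

lemma graph_iso_trans:
  assumes "graph_iso U D V E" and "graph_iso V E W F"
  shows "graph_iso U D W F"
proof -
  obtain f where f: "bij_betw f U V" and adj_f: "\<forall>x\<in>U. \<forall>y\<in>U. D x y \<longleftrightarrow> E (f x) (f y)"
    using assms(1) unfolding graph_iso_def by blast
  obtain g where g: "bij_betw g V W" and adj_g: "\<forall>x\<in>V. \<forall>y\<in>V. E x y \<longleftrightarrow> F (g x) (g y)"
    using assms(2) unfolding graph_iso_def by blast
  have "bij_betw (g \<circ> f) U W" using f g by (rule bij_betw_trans)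
  moreover have "\<forall>x\<in>U. \<forall>y\<in>U. D x y \<longleftrightarrow> F ((g \<circ> f) x) ((g \<circ> f) y)"
    using adj_f adj_g bij_betwE[OF f] by simp
  ultimately show ?thesis unfolding graph_iso_def by blast
qed

lemma graph_iso_path3I:
  assumes "simple_graph V E" and "V = {p, q, r}" and "distinct [p, q, r]"
    and "E p q" and "E q r" and "\<not> E p r"
  shows "graph_iso V E {..<3} (path_adj 3)"
proof -
  define h where "h x = (if x = p then 0 else if x = q then 1 else 2 :: nat)" for x
  have h: "h p = 0" "h q = 1" "h r = 2" using assms(3) by (auto simp: h_def)
  have "{..<3} = {0, 1, 2 :: nat}" by auto
  then have "bij_betw h V {..<3}"
    using h assms(2,3) by (auto simp: bij_betw_def inj_on_def)
  moreover have "\<forall>x\<in>V. \<forall>y\<in>V. E x y \<longleftrightarrow> path_adj 3 (h x) (h y)"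
    using assms h unfolding simple_graph_def path_adj_def by auto
  ultimately show ?thesis unfolding graph_iso_def by blast
qed

lemma graph_iso_path3_if_no_isolated_triangle_free:
  assumes sg: "simple_graph V E" and "card V = 3"
    and no_isolated: "\<And>u. u \<in> V \<Longrightarrow> \<exists>v. E u v"
    and triangle_free: "\<And>u v w. E u v \<Longrightarrow> E v w \<Longrightarrow> E u w \<Longrightarrow> False"
  shows "graph_iso V E {..<3} (path_adj 3)"
proof -
  obtain u v w where V: "V = {u, v, w}" and d: "distinct [u, v, w]"
    using \<open>card V = 3\<close> by (auto simp: card_3_iff)
  have sym: "E x y \<Longrightarrow> E y x" and ends: "E x y \<Longrightarrow> y \<in> V \<and> x \<noteq> y" for x y
    using sg unfolding simple_graph_def by blast+
  have "E u v \<or> E u w" "E v u \<or> E v w" "E w u \<or> E w v"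
    using no_isolated ends V by blast+
  then consider "E u w" "E w v" "\<not> E u v" | "E v u" "E u w" "\<not> E v w"
    | "E u v" "E v w" "\<not> E u w"
    using triangle_free sym by blast
  then show ?thesis
  proof cases
    case 1
    moreover have "V = {u, w, v}" using V by auto
    ultimately show ?thesis using graph_iso_path3I[OF sg, of u w v] d by auto
  next
    case 2
    moreover have "V = {v, u, w}" using V by auto
    ultimately show ?thesis using graph_iso_path3I[OF sg, of v u w] d by auto
  next
    case 3
    then show ?thesis using graph_iso_path3I[OF sg, of u v w] V d by auto
  qed
qed

definition zmod_ring :: "nat \<Rightarrow> nat ring" where
  "zmod_ring n = \<lparr>carrier = {..<n}, mult = (\<lambda>x y. x * y mod n), one = 1 mod n,
     zero = 0, add = (\<lambda>x y. (x + y) mod n)\<rparr>"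

lemma zmod_ring_simps [simp]:
  "carrier (zmod_ring n) = {..<n}"
  "x \<otimes>\<^bsub>zmod_ring n\<^esub> y = x * y mod n"
  "\<one>\<^bsub>zmod_ring n\<^esub> = 1 mod n"
  "\<zero>\<^bsub>zmod_ring n\<^esub> = 0"
  "x \<oplus>\<^bsub>zmod_ring n\<^esub> y = (x + y) mod n"
  by (simp_all add: zmod_ring_def)

lemma cring_zmod_ring:
  assumes "n > 0"
  shows "cring (zmod_ring n)"
proof (rule cringI)
  show "abelian_group (zmod_ring n)"
  proof (rule abelian_groupI)
    fix x assume "x \<in> carrier (zmod_ring n)"
    then show "\<exists>y \<in> carrier (zmod_ring n). y \<oplus>\<^bsub>zmod_ring n\<^esub> x = \<zero>\<^bsub>zmod_ring n\<^esub>"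
      by (intro bexI[of _ "(n - x) mod n"]) (auto simp: mod_add_left_eq assms)
  qed (auto simp: assms mod_add_left_eq mod_add_right_eq ac_simps)
  show "comm_monoid (zmod_ring n)"
    by (rule comm_monoidI) (use assms in \<open>auto simp: mod_mult_left_eq mod_mult_right_eq ac_simps\<close>)
  show "(x \<oplus>\<^bsub>zmod_ring n\<^esub> y) \<otimes>\<^bsub>zmod_ring n\<^esub> z =
      x \<otimes>\<^bsub>zmod_ring n\<^esub> z \<oplus>\<^bsub>zmod_ring n\<^esub> y \<otimes>\<^bsub>zmod_ring n\<^esub> z" for x y z
    by (simp add: mod_mult_left_eq mod_add_eq distrib_right)
qed

lemma (in ring) noetherian_ring_if_finite_carrier:
  assumes "finite (carrier R)"
  shows "noetherian_ring R"
proof (rule noetherian_ringI)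
  fix I assume I: "ideal I R"
  then have "I \<subseteq> carrier R" by (rule ideal.axioms(1)[THEN additive_subgroup.a_subset])
  moreover have "Idl I = I"
    using genideal_self[OF \<open>I \<subseteq> carrier R\<close>] genideal_minimal[OF I] by blast
  ultimately show "\<exists>A \<subseteq> carrier R. finite A \<and> I = Idl A"
    using finite_subset[OF _ assms] by metis
qed

lemma noetherian_ring_zmod_ring:
  assumes "n > 0"
  shows "noetherian_ring (zmod_ring n)"
proof -
  interpret cring "zmod_ring n" using assms by (rule cring_zmod_ring)
  show ?thesis by (rule noetherian_ring_if_finite_carrier) simp
qed

(* Writing the carrier as a list lets code_simp decide the statement by evaluation. *)
lemma GammaE_V_zmod_16: "GammaE_V (zmod_ring 16) = {{2, 6, 10, 14}, {4, 12}, {8}}"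
  unfolding GammaE_V_def zd_star_def ann_class_def ann_def zmod_ring_def
    lessThan_atLeast0 atLeastLessThan_upt
  by code_simp

lemma graph_iso_GammaE_zmod_16:
  "graph_iso (GammaE_V (zmod_ring 16)) (GammaE_E (zmod_ring 16)) {..<3} (path_adj 3)"
  unfolding graph_iso_def GammaE_E_def GammaE_V_zmod_16
  unfolding path_adj_def zmod_ring_def lessThan_atLeast0 atLeastLessThan_upt
  by (rule exI[of _ "\<lambda>X. if 8 \<in> X then 1 else if 2 \<in> X then 0 else 2 :: nat"]) code_simp

lemma mem_ann_iff:
  fixes R (structure)
  shows "t \<in> ann R x \<longleftrightarrow> t \<in> carrier R \<and> x \<otimes> t = \<zero>"
  by (simp add: ann_def)

lemma zd_starI:
  fixes R (structure)
  assumes "x \<in> carrier R" "y \<in> carrier R" "x \<noteq> \<zero>" "y \<noteq> \<zero>" "x \<otimes> y = \<zero>"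
  shows "x \<in> zd_star R"
  using assms by (auto simp: zd_star_def)

lemma zd_starE:
  fixes R (structure)
  assumes "x \<in> zd_star R"
  obtains y where "x \<in> carrier R" "x \<noteq> \<zero>" "y \<in> carrier R" "y \<noteq> \<zero>" "x \<otimes> y = \<zero>"
  using assms by (auto simp: zd_star_def)

lemma ann_class_eq_iff:
  "x \<in> carrier R \<Longrightarrow> y \<in> carrier R \<Longrightarrow> ann_class R x = ann_class R y \<longleftrightarrow> ann R x = ann R y"
  unfolding ann_class_def by blast

lemma GammaE_V_subset_carrier: "X \<in> GammaE_V R \<Longrightarrow> X \<subseteq> carrier R"
  by (auto simp: GammaE_V_def ann_class_def)

lemma GammaE_VE:
  assumes "X \<in> GammaE_V R"
  obtains x where "x \<in> zd_star R" "x \<in> carrier R" "X = ann_class R x"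
  using assms by (auto simp: GammaE_V_def zd_star_def)

context cring
begin

lemma mult_zero_if_ann_eq:
  assumes "x \<in> carrier R" "y \<in> carrier R" "x' \<in> carrier R" "y' \<in> carrier R"
    and "ann R x' = ann R x" "ann R y' = ann R y" and "x' \<otimes> y' = \<zero>"
  shows "x \<otimes> y = \<zero>"
proof -
  have "y' \<in> ann R x" using assms by (metis mem_ann_iff)
  then have "x \<in> ann R y'" using assms(1,4) by (simp add: mem_ann_iff m_comm)
  then have "x \<in> ann R y" using assms(6) by simp
  then show ?thesis using assms(1,2) by (simp add: mem_ann_iff m_comm)
qed

lemma GammaE_E_ann_class_iff:
  assumes x: "x \<in> zd_star R" and y: "y \<in> zd_star R"
  shows "GammaE_E R (ann_class R x) (ann_class R y) \<longleftrightarrow> ann R x \<noteq> ann R y \<and> x \<otimes> y = \<zero>"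
proof -
  have xr: "x \<in> carrier R" and yr: "y \<in> carrier R" using x y by (auto elim: zd_starE)
  have "(\<exists>x'\<in>ann_class R x. \<exists>y'\<in>ann_class R y. x' \<otimes> y' = \<zero>) \<longleftrightarrow> x \<otimes> y = \<zero>"
    using mult_zero_if_ann_eq[OF xr yr] xr yr by (auto simp: ann_class_def)
  then show ?thesis
    using x y ann_class_eq_iff[OF xr yr] by (auto simp: GammaE_E_def GammaE_V_def)
qed

lemma simple_graph_GammaE: "simple_graph (GammaE_V R) (GammaE_E R)"
proof -
  have "GammaE_E R Y X" if "GammaE_E R X Y" for X Y
  proof -
    obtain x y where "x \<in> X" "y \<in> Y" "x \<otimes> y = \<zero>"
      using \<open>GammaE_E R X Y\<close> by (auto simp: GammaE_E_def)
    moreover have "X \<subseteq> carrier R" "Y \<subseteq> carrier R"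
      using that by (auto simp: GammaE_E_def dest: GammaE_V_subset_carrier)
    ultimately have "y \<otimes> x = \<zero>" by (metis m_comm subsetD)
    then show ?thesis using that \<open>x \<in> X\<close> \<open>y \<in> Y\<close> by (auto simp: GammaE_E_def)
  qed
  moreover have "X \<in> GammaE_V R \<and> Y \<in> GammaE_V R \<and> X \<noteq> Y" if "GammaE_E R X Y" for X Y
    using that by (simp add: GammaE_E_def)
  ultimately show ?thesis unfolding simple_graph_def by blast
qed

lemma add_mem_zd_star:
  assumes a: "a \<in> zd_star R" and b: "b \<in> zd_star R" and "ann R a \<noteq> ann R b"
    and c: "c \<in> carrier R" "c \<noteq> \<zero>" and "a \<otimes> c = \<zero>" "b \<otimes> c = \<zero>"
  shows "a \<oplus> b \<in> zd_star R"
proof -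
  have ar: "a \<in> carrier R" and br: "b \<in> carrier R" using a b by (auto elim: zd_starE)
  have "a \<oplus> b \<noteq> \<zero>"
  proof
    assume "a \<oplus> b = \<zero>"
    then have "a = \<ominus> b" by (rule sum_zero_eq_neg[OF ar br])
    then have "ann R a = ann R b"
      using br by (auto simp: mem_ann_iff l_minus)
    with \<open>ann R a \<noteq> ann R b\<close> show False ..
  qed
  moreover have "(a \<oplus> b) \<otimes> c = \<zero>" using assms ar br by (simp add: l_distr)
  ultimately show ?thesis using ar br c by (intro zd_starI[where R = R and y = c]) auto
qed

lemma square_zero_in_triangle:
  assumes a: "a \<in> zd_star R" and b: "b \<in> zd_star R" and c: "c \<in> zd_star R"
    and "ann R a \<noteq> ann R b"
    and ab: "a \<otimes> b = \<zero>" and ac: "a \<otimes> c = \<zero>" and bc: "b \<otimes> c = \<zero>"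
    and cover: "ann R ` zd_star R \<subseteq> {ann R a, ann R b, ann R c}"
  shows "a \<otimes> a = \<zero> \<or> b \<otimes> b = \<zero>"
proof -
  have ar: "a \<in> carrier R" and br: "b \<in> carrier R" and cr: "c \<in> carrier R" "c \<noteq> \<zero>"
    using a b c by (auto elim: zd_starE)
  let ?s = "a \<oplus> b"
  have "?s \<in> zd_star R"
    using add_mem_zd_star[OF a b \<open>ann R a \<noteq> ann R b\<close> cr] ac bc by simp
  then have "ann R ?s \<in> {ann R a, ann R b, ann R c}" using cover by blast
  moreover have "b \<in> ann R a" "a \<in> ann R b" "a \<in> ann R c"
    using ab ac ar br cr by (auto simp: mem_ann_iff m_comm)
  ultimately have "?s \<otimes> a = \<zero> \<or> ?s \<otimes> b = \<zero>"
    by (auto simp: mem_ann_iff)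
  moreover have "?s \<otimes> a = a \<otimes> a" "?s \<otimes> b = b \<otimes> b"
    using ab ar br by (simp_all add: l_distr m_comm[OF br ar])
  ultimately show ?thesis by simp
qed

lemma ann_eq_if_annihilates_zd_star:
  assumes "a \<in> carrier R" "a \<noteq> \<zero>" and "zd_star R \<subseteq> ann R a"
  shows "ann R a = insert \<zero> (zd_star R)"
proof
  show "ann R a \<subseteq> insert \<zero> (zd_star R)"
  proof
    fix t assume "t \<in> ann R a"
    then have "t \<in> carrier R" "t \<otimes> a = \<zero>"
      using assms(1) by (simp_all add: mem_ann_iff m_comm)
    then show "t \<in> insert \<zero> (zd_star R)"
      using zd_starI[where R = R and x = t and y = a] assms(1,2) by blast
  qed
  show "insert \<zero> (zd_star R) \<subseteq> ann R a"
    using assms by (simp add: mem_ann_iff)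
qed

lemma triangle_free:
  assumes a: "a \<in> zd_star R" and b: "b \<in> zd_star R" and c: "c \<in> zd_star R"
    and distinct: "distinct [ann R a, ann R b, ann R c]"
    and ab: "a \<otimes> b = \<zero>" and ac: "a \<otimes> c = \<zero>" and bc: "b \<otimes> c = \<zero>"
    and cover: "ann R ` zd_star R \<subseteq> {ann R a, ann R b, ann R c}"
  shows False
proof -
  have ar: "a \<in> carrier R" "a \<noteq> \<zero>" and br: "b \<in> carrier R" "b \<noteq> \<zero>"
    and cr: "c \<in> carrier R" "c \<noteq> \<zero>"
    using a b c by (auto elim: zd_starE)
  have ba: "b \<otimes> a = \<zero>" and ca: "c \<otimes> a = \<zero>" and cb: "c \<otimes> b = \<zero>"
    using ab ac bc ar br cr by (simp_all add: m_comm)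
  \<comment> \<open>A vertex of square zero lies in all three annihilators, hence kills every zero divisor.\<close>
  have ann_nilpotent: "ann R x = insert \<zero> (zd_star R)"
    if x: "x \<in> {a, b, c}" and "x \<otimes> x = \<zero>" for x
  proof (rule ann_eq_if_annihilates_zd_star)
    show "x \<in> carrier R" "x \<noteq> \<zero>" using x ar br cr by auto
    have "x \<in> ann R a \<inter> ann R b \<inter> ann R c"
      using x \<open>x \<otimes> x = \<zero>\<close> ab ac bc ba ca cb ar br cr by (auto simp: mem_ann_iff)
    then have in_ann: "x \<in> ann R t" if "t \<in> zd_star R" for t
      using cover that by blast
    show "zd_star R \<subseteq> ann R x"
    proof
      fix t assume t: "t \<in> zd_star R"
      then have "t \<in> carrier R" by (auto elim: zd_starE)
      then show "t \<in> ann R x"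
        using in_ann[OF t] \<open>x \<in> carrier R\<close> by (simp add: mem_ann_iff m_comm)
    qed
  qed
  have "a \<otimes> a = \<zero> \<or> b \<otimes> b = \<zero>"
    using square_zero_in_triangle[OF a b c _ ab ac bc cover] distinct by simp
  moreover have "b \<otimes> b = \<zero> \<or> c \<otimes> c = \<zero>"
    using square_zero_in_triangle[OF b c a _ bc ba ca] distinct cover by (simp add: insert_commute)
  moreover have "a \<otimes> a = \<zero> \<or> c \<otimes> c = \<zero>"
    using square_zero_in_triangle[OF a c b _ ac ab cb] distinct cover by (simp add: insert_commute)
  ultimately show False
    using ann_nilpotent distinct by (metis insertCI distinct_length_2_or_more)
qed

lemma exists_neighbour_with_other_ann:
  assumes x: "x \<in> zd_star R" and z: "z \<in> zd_star R" and "ann R z \<noteq> ann R x"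
  shows "\<exists>y\<in>zd_star R. ann R y \<noteq> ann R x \<and> x \<otimes> y = \<zero>"
proof (rule ccontr)
  assume no_other: "\<not> ?thesis"
  obtain y where xr: "x \<in> carrier R" "x \<noteq> \<zero>" and y: "y \<in> carrier R" "y \<noteq> \<zero>" "x \<otimes> y = \<zero>"
    using x by (rule zd_starE)
  have same: "ann R t = ann R x" if "t \<in> carrier R" "t \<noteq> \<zero>" "x \<otimes> t = \<zero>" for t
    using no_other zd_starI[where R = R and x = t and y = x] that xr by (auto simp: m_comm)
  have zr: "z \<in> carrier R" using z by (auto elim: zd_starE)
  have "x \<in> ann R y" using y xr by (simp add: mem_ann_iff m_comm)
  then have xx: "x \<otimes> x = \<zero>" using same[OF y] by (simp add: mem_ann_iff)
  have xz: "x \<otimes> z \<noteq> \<zero>" using same[of z] z zr \<open>ann R z \<noteq> ann R x\<close> by (auto elim: zd_starE)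
  obtain w where w: "w \<in> carrier R" "w \<noteq> \<zero>" "z \<otimes> w = \<zero>" using z by (rule zd_starE)
  have "ann R (x \<otimes> z) = ann R x"
    using same[of "x \<otimes> z"] xz xx xr zr by (simp add: m_assoc[symmetric])
  moreover have "w \<in> ann R (x \<otimes> z)" using w xr zr by (simp add: mem_ann_iff m_assoc)
  ultimately have "ann R w = ann R x" using same[OF w(1,2)] by (simp add: mem_ann_iff)
  moreover have "z \<in> ann R w" using w zr by (simp add: mem_ann_iff m_comm)
  ultimately show False using xz by (simp add: mem_ann_iff)
qed

lemma GammaE_has_neighbour:
  assumes "X \<in> GammaE_V R" "Y \<in> GammaE_V R" "X \<noteq> Y"
  shows "\<exists>Z. GammaE_E R X Z"
proof -
  obtain x where x: "x \<in> zd_star R" "x \<in> carrier R" "X = ann_class R x"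
    using assms(1) by (rule GammaE_VE)
  obtain z where z: "z \<in> zd_star R" "z \<in> carrier R" "Y = ann_class R z"
    using assms(2) by (rule GammaE_VE)
  have "ann R z \<noteq> ann R x" using assms(3) x z ann_class_eq_iff[where R = R] by blast
  then obtain y where "y \<in> zd_star R" "ann R y \<noteq> ann R x" "x \<otimes> y = \<zero>"
    using exists_neighbour_with_other_ann[OF x(1) z(1)] by blast
  then have "GammaE_E R X (ann_class R y)" using GammaE_E_ann_class_iff x by metis
  then show ?thesis ..
qed

lemma GammaE_triangle_free:
  assumes card: "card (GammaE_V R) = 3"
    and XY: "GammaE_E R X Y" and YZ: "GammaE_E R Y Z" and XZ: "GammaE_E R X Z"
  shows False
proof -
  have V: "X \<in> GammaE_V R" "Y \<in> GammaE_V R" "Z \<in> GammaE_V R" "distinct [X, Y, Z]"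
    using XY YZ XZ by (auto simp: GammaE_E_def)
  obtain x where x: "x \<in> zd_star R" "x \<in> carrier R" "X = ann_class R x" using V(1) by (rule GammaE_VE)
  obtain y where y: "y \<in> zd_star R" "y \<in> carrier R" "Y = ann_class R y" using V(2) by (rule GammaE_VE)
  obtain z where z: "z \<in> zd_star R" "z \<in> carrier R" "Z = ann_class R z" using V(3) by (rule GammaE_VE)
  have "finite (GammaE_V R)" using card by (intro card_ge_0_finite) simp
  moreover have "card {X, Y, Z} = 3" using V(4) by simp
  ultimately have vertices: "GammaE_V R = {X, Y, Z}"
    using V card card_subset_eq[of "GammaE_V R" "{X, Y, Z}"] by simp
  have "ann R t \<in> {ann R x, ann R y, ann R z}" if t: "t \<in> zd_star R" for t
  proof -
    have "t \<in> carrier R" using t by (auto elim: zd_starE)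
    moreover have "ann_class R t \<in> {X, Y, Z}" using t vertices by (auto simp: GammaE_V_def)
    ultimately show ?thesis using x y z ann_class_eq_iff[where R = R] by auto
  qed
  then have "ann R ` zd_star R \<subseteq> {ann R x, ann R y, ann R z}" by blast
  moreover have "ann R x \<noteq> ann R y" "x \<otimes> y = \<zero>"
    using XY x y GammaE_E_ann_class_iff[OF x(1) y(1)] by simp_all
  moreover have "ann R y \<noteq> ann R z" "y \<otimes> z = \<zero>"
    using YZ y z GammaE_E_ann_class_iff[OF y(1) z(1)] by simp_all
  moreover have "ann R x \<noteq> ann R z" "x \<otimes> z = \<zero>"
    using XZ x z GammaE_E_ann_class_iff[OF x(1) z(1)] by simp_all
  ultimately show False using triangle_free[OF x(1) y(1) z(1)] by simp
qed

lemma GammaE_graph_iso_path3: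
  assumes card: "card (GammaE_V R) = 3"
  shows "graph_iso (GammaE_V R) (GammaE_E R) {..<3} (path_adj 3)"
proof (rule graph_iso_path3_if_no_isolated_triangle_free[OF simple_graph_GammaE card])
  fix X assume X: "X \<in> GammaE_V R"
  obtain A B C where "GammaE_V R = {A, B, C}" "distinct [A, B, C]"
    using card unfolding card_3_iff by auto
  then obtain Y where "Y \<in> GammaE_V R" "X \<noteq> Y" by auto
  then show "\<exists>Z. GammaE_E R X Z" by (rule GammaE_has_neighbour[OF X])
qed (fact GammaE_triangle_free[OF card])

end

theorem corollary1p6:
  shows "\<exists>(V :: nat set) E. simple_graph V E \<and> card V = 3 \<and>
     (\<exists>R :: nat ring. cring R \<and> noetherian_ring R \<and>
        graph_iso (GammaE_V R) (GammaE_E R) V E) \<and>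
     (\<forall>(R :: 'a ring) (W :: 'w set) F.
        cring R \<and> noetherian_ring R \<and> simple_graph W F \<and> card W = 3 \<and>
        graph_iso (GammaE_V R) (GammaE_E R) W F \<longrightarrow> graph_iso W F V E)"
proof (intro exI[of _ "{..<3}"] exI[of _ "path_adj 3"] conjI allI impI)
  show "simple_graph {..<3} (path_adj 3)" by (rule simple_graph_path_adj)
  show "card {..<3 :: nat} = 3" by simp
  have "cring (zmod_ring 16)" "noetherian_ring (zmod_ring 16)"
    by (simp_all add: cring_zmod_ring noetherian_ring_zmod_ring)
  then show "\<exists>R :: nat ring. cring R \<and> noetherian_ring R \<and>
      graph_iso (GammaE_V R) (GammaE_E R) {..<3} (path_adj 3)"
    using graph_iso_GammaE_zmod_16 by blast
next
  fix R :: "'a ring" and W :: "'w set" and F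
  assume "cring R \<and> noetherian_ring R \<and> simple_graph W F \<and> card W = 3 \<and>
      graph_iso (GammaE_V R) (GammaE_E R) W F"
  then have R: "cring R" and "card W = 3" and iso: "graph_iso (GammaE_V R) (GammaE_E R) W F"
    by simp_all
  then have "card (GammaE_V R) = 3"
    unfolding graph_iso_def by (metis bij_betw_same_card)
  then have "graph_iso (GammaE_V R) (GammaE_E R) {..<3} (path_adj 3)"
    by (rule cring.GammaE_graph_iso_path3[OF R])
  then show "graph_iso W F {..<3} (path_adj 3)"
    by (rule graph_iso_trans[OF graph_iso_sym[OF iso]])
qed

end
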